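(* Let $N\ge3$ be odd. Define $v_0=1$, $v_1=1/2$ and, for $0<k<N-1$, $$v_{k+1}=\frac{\tfrac12(N^2-1)v_k+k(N^2-2k^2-3k-2)v_k-k(N^2-k^2)v_{k-1}}{(k+1)\big(N^2-(k+1)^2\big)}.$$ Then $\vec v=(v_0,\dots,v_{N-1})$ is an eigenvector, with rational entries, of the $N\times N$ matrix $J_N$ (symmetric tridiagonal with $(J_N)_{kk}=k(2k^2+3k+2-N^2)$, $(J_N)_{k,k+1}=(J_N)_{k+1,k}=(k+1)(N^2-(k+1)^2)$) with eigenvalue $(N^2-1)/2$, and hence also an eigenvector of the Pascal matrix $(T_N)_{jk}=\binom{j+k}{j}$ with eigenvalue $1$; every eigenvector of $J_N$ with eigenvalue $(N^2-1)/2$ is a scalar multiple of $\vec v$.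
   Context: Matrix indices start at $0$. *)

theory Defs
  imports Complex_Main "Jordan_Normal_Form.Char_Poly"
begin

fun vseq :: "nat \<Rightarrow> nat \<Rightarrow> real" where
  "vseq N 0 = 1"
| "vseq N (Suc 0) = 1/2"
| "vseq N (Suc (Suc k)) =
     (let n = real N; j = real (Suc k) in
      ((n^2 - 1)/2 * vseq N (Suc k) + j * (n^2 - 2*j^2 - 3*j - 2) * vseq N (Suc k)
        - j * (n^2 - j^2) * vseq N k) / ((j + 1) * (n^2 - (j + 1)^2)))"

definition vvec :: "nat \<Rightarrow> real vec" where
  "vvec N = vec N (vseq N)"

definition Jmat :: "nat \<Rightarrow> real mat" where
  "Jmat N = mat N N (\<lambda>(j, k).
     let n = real N in
     if j = k then real k * (2 * real k^2 + 3 * real k + 2 - n^2)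
     else if k = j + 1 then real k * (n^2 - real k^2)
     else if j = k + 1 then real j * (n^2 - real j^2)
     else 0)"

definition Pascal :: "nat \<Rightarrow> real mat" where
  "Pascal N = mat N N (\<lambda>(j, k). real ((j + k) choose j))"

end

theory Submission
  imports Defs
begin

text \<open>Let C = J_N - ((N^2 - 1)/2) I and K_{ij} = (-1)^j binom(i, j). Then K^2 = I and
  K C = - C K, so for odd N we get det C = - det C = 0. As C is tridiagonal with nonzero
  off-diagonal entries k (N^2 - k^2), its kernel is spanned by the vector v whose entries obey
  the three-term recursion; hence v is an eigenvector of J_N. The Pascal matrix T = L L^T,
  L_{ij} = binom(i, j), commutes with C and satisfies T K T = K. So T v = \<mu> v, K v = v,
  and v = T K T v = \<mu>^2 v; finally \<mu> \<ge> 0 because T is a Gram matrix.\<close>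

text \<open>The entry e k sits at positions (k - 1, k) and (k, k - 1); the boundary values e 0 and
  e n lie outside the matrix, and the lemmas below require them to vanish so that every row has
  the same three-term shape.\<close>

definition tridiag :: "nat \<Rightarrow> (nat \<Rightarrow> 'a) \<Rightarrow> (nat \<Rightarrow> 'a) \<Rightarrow> 'a :: zero mat" where
  "tridiag n d e = mat n n (\<lambda>(j, k).
     if j = k then d k else if k = Suc j then e k else if j = Suc k then e j else 0)"

lemma tridiag_carrier [simp]: "tridiag n d e \<in> carrier_mat n n"
  by (simp add: tridiag_def)

lemma tridiag_dim [simp]: "dim_row (tridiag n d e) = n" "dim_col (tridiag n d e) = n"
  by (simp_all add: tridiag_def)

lemma sum_tridiag_row:
  fixes d e f :: "nat \<Rightarrow> 'a :: comm_ring_1"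
  assumes "e 0 = 0" "e n = 0" "a < n"
  shows "(\<Sum>l<n. tridiag n d e $$ (a, l) * f l) = e a * f (a - 1) + d a * f a + e (Suc a) * f (Suc a)"
proof -
  have "tridiag n d e $$ (a, l) * f l =
      (if l = a then d a * f a else 0) + (if l = Suc a then e (Suc a) * f (Suc a) else 0)
      + (if Suc l = a then e a * f (a - 1) else 0)" if "l < n" for l
    using assms that by (auto simp: tridiag_def)
  then have "(\<Sum>l<n. tridiag n d e $$ (a, l) * f l) =
      (\<Sum>l<n. if l = a then d a * f a else 0) + (\<Sum>l<n. if l = Suc a then e (Suc a) * f (Suc a) else 0)
      + (\<Sum>l<n. if Suc l = a then e a * f (a - 1) else 0)"
    by (simp add: sum.distrib)
  also have "\<dots> = e a * f (a - 1) + d a * f a + e (Suc a) * f (Suc a)"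
    using assms by (cases a; cases "Suc a = n") (auto simp: sum.delta)
  finally show ?thesis .
qed

lemma tridiag_symmetric: "j < n \<Longrightarrow> k < n \<Longrightarrow> tridiag n d e $$ (j, k) = tridiag n d e $$ (k, j)"
  by (auto simp: tridiag_def)

lemma tridiag_mult_vec_index:
  fixes d e :: "nat \<Rightarrow> 'a :: comm_ring_1"
  assumes "e 0 = 0" "e n = 0" "dim_vec w = n" "a < n"
  shows "(tridiag n d e *\<^sub>v w) $ a = e a * w $ (a - 1) + d a * w $ a + e (Suc a) * w $ Suc a"
  using assms sum_tridiag_row[of e n a d "\<lambda>l. w $ l"]
  by (simp add: scalar_prod_def atLeast0LessThan)

lemma tridiag_mult_index:
  fixes d e :: "nat \<Rightarrow> 'a :: comm_ring_1"
  assumes "e 0 = 0" "e n = 0" "i < n" "j < n"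
  shows "(tridiag n d e * mat n n g) $$ (i, j) =
    e i * g (i - 1, j) + d i * g (i, j) + e (Suc i) * g (Suc i, j)"
  using assms sum_tridiag_row[of e n i d "\<lambda>l. g (l, j)"]
  by (simp add: scalar_prod_def atLeast0LessThan)

lemma mult_tridiag_index:
  fixes d e :: "nat \<Rightarrow> 'a :: comm_ring_1"
  assumes "e 0 = 0" "e n = 0" "i < n" "j < n"
  shows "(mat n n g * tridiag n d e) $$ (i, j) =
    g (i, j - 1) * e j + g (i, j) * d j + g (i, Suc j) * e (Suc j)"
proof -
  have "(mat n n g * tridiag n d e) $$ (i, j) = (\<Sum>l<n. tridiag n d e $$ (j, l) * g (i, l))"
    using assms by (auto simp: scalar_prod_def atLeast0LessThan mult.commute tridiag_symmetric intro!: sum.cong)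
  then show ?thesis
    using assms sum_tridiag_row[of e n j d "\<lambda>l. g (i, l)"] by (simp add: mult.commute)
qed

lemma char_matrix_tridiag:
  "char_matrix (tridiag n d e) c = tridiag n (\<lambda>k. d k - c) e"
  by (rule eq_matI) (auto simp: char_matrix_def tridiag_def)

lemma tridiag_kernel_trivial:
  fixes d e :: "nat \<Rightarrow> 'a :: idom"
  assumes e0: "e 0 = 0" and en: "e n = 0"
    and e_nz: "\<And>k. 0 < k \<Longrightarrow> k < n \<Longrightarrow> e k \<noteq> 0"
    and w: "w \<in> carrier_vec n" and w0: "w $ 0 = 0"
    and rows: "\<And>a. Suc a < n \<Longrightarrow> (tridiag n d e *\<^sub>v w) $ a = 0"
  shows "w = 0\<^sub>v n"
proof -
  have "\<forall>i\<le>k. i < n \<longrightarrow> w $ i = 0" for k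
  proof (induction k)
    case 0
    then show ?case using w0 by simp
  next
    case (Suc m)
    have "w $ Suc m = 0" if "Suc m < n"
    proof -
      have "e m * w $ (m - 1) + d m * w $ m + e (Suc m) * w $ Suc m = 0"
        using rows[OF that] tridiag_mult_vec_index[OF e0 en, of w m d] w that by simp
      moreover have "w $ (m - 1) = 0" "w $ m = 0" using Suc.IH that by auto
      ultimately show ?thesis using e_nz[of "Suc m"] that by simp
    qed
    then show ?case using Suc.IH le_Suc_eq by blast
  qed
  then show ?thesis using w by (intro eq_vecI) auto
qed

lemma det_zero_if_anticommutes_with_involution:
  fixes A K :: "'a :: {idom, ring_char_0} mat"
  assumes A: "A \<in> carrier_mat n n" and K: "K \<in> carrier_mat n n"
    and KK: "K * K = 1\<^sub>m n" and KA: "K * A = - (A * K)" and "odd n"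
  shows "det A = 0"
proof -
  have "- A = (-1) \<cdot>\<^sub>m A" by (rule eq_matI) auto
  then have "det (- A) = - det A" using A \<open>odd n\<close> by simp
  moreover have "K * A * K = - A"
    using A K by (simp add: KA assoc_mult_mat[of A n n K n K n] KK)
  ultimately have "det K * det A * det K = - det A"
    using A K by (metis det_mult mult_carrier_mat)
  moreover have "det K * det K = 1"
    using det_mult[OF K K] KK by simp
  ultimately have "det A = - det A" by (metis mult.commute mult.left_commute mult_1)
  then show ?thesis by simp
qed

lemma gram_eigenvalue_nonneg:
  fixes L :: "real mat"
  assumes L: "L \<in> carrier_mat n n" and v: "v \<in> carrier_vec n" "v \<noteq> 0\<^sub>v n"
    and ev: "(L * transpose_mat L) *\<^sub>v v = \<mu> \<cdot>\<^sub>v v"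
  shows "\<mu> \<ge> 0"
proof -
  have "\<mu> * (v \<bullet> v) = v \<bullet> (L *\<^sub>v (transpose_mat L *\<^sub>v v))"
    using ev L v by (simp add: assoc_mult_mat_vec [of _ n n _ n])
  also have "\<dots> = (transpose_mat L *\<^sub>v v) \<bullet> (transpose_mat L *\<^sub>v v)"
    using L v by (simp add: transpose_vec_mult_scalar [of _ n n])
  also have "\<dots> \<ge> 0"
    by (simp add: scalar_prod_def sum_nonneg)
  finally have "\<mu> * (v \<bullet> v) \<ge> 0" .
  moreover have "v \<bullet> v > 0"
    using conjugate_square_greater_0_vec [OF v(1)] v(2) by simp
  ultimately show ?thesis by (simp add: zero_le_mult_iff)
qed

definition lower_pascal :: "nat \<Rightarrow> 'a :: comm_ring_1 mat" where
  "lower_pascal n = mat n n (\<lambda>(i, j). of_nat (i choose j))"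

definition sign_diag :: "nat \<Rightarrow> 'a :: comm_ring_1 mat" where
  "sign_diag n = mat n n (\<lambda>(i, j). if i = j then (-1) ^ i else 0)"

definition signed_choose :: "nat \<Rightarrow> nat \<Rightarrow> 'a :: comm_ring_1" where
  "signed_choose i j = (-1) ^ j * of_nat (i choose j)"

definition signed_pascal :: "nat \<Rightarrow> 'a :: comm_ring_1 mat" where
  "signed_pascal n = mat n n (\<lambda>(i, j). signed_choose i j)"

lemma pascal_carrier [simp]:
  "lower_pascal n \<in> carrier_mat n n" "sign_diag n \<in> carrier_mat n n"
  "signed_pascal n \<in> carrier_mat n n"
  by (simp_all add: lower_pascal_def sign_diag_def signed_pascal_def)

lemma pascal_dim [simp]:
  "dim_row (lower_pascal n) = n" "dim_col (lower_pascal n) = n"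
  "dim_row (sign_diag n) = n" "dim_col (sign_diag n) = n"
  "dim_row (signed_pascal n) = n" "dim_col (signed_pascal n) = n"
  by (simp_all add: lower_pascal_def sign_diag_def signed_pascal_def)

lemma pascal_index [simp]:
  "i < n \<Longrightarrow> j < n \<Longrightarrow> lower_pascal n $$ (i, j) = of_nat (i choose j)"
  "i < n \<Longrightarrow> j < n \<Longrightarrow> sign_diag n $$ (i, j) = (if i = j then (-1) ^ i else 0)"
  "i < n \<Longrightarrow> j < n \<Longrightarrow> signed_pascal n $$ (i, j) = signed_choose i j"
  by (simp_all add: lower_pascal_def sign_diag_def signed_pascal_def)

lemma signed_pascal_eq_mult: "signed_pascal n = lower_pascal n * (sign_diag n :: 'a :: comm_ring_1 mat)"
proof (rule eq_matI)
  fix i j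
  assume "i < dim_row (lower_pascal n * sign_diag n :: 'a mat)"
    and "j < dim_col (lower_pascal n * sign_diag n :: 'a mat)"
  then have ij: "i < n" "j < n" by auto
  have "(lower_pascal n * sign_diag n) $$ (i, j) =
      (\<Sum>l<n. of_nat (i choose l) * (if l = j then (-1) ^ l else (0 :: 'a)))"
    using ij by (auto simp: scalar_prod_def atLeast0LessThan intro!: sum.cong)
  also have "\<dots> = (\<Sum>l<n. if l = j then of_nat (i choose j) * (-1) ^ j else 0)"
    by (rule sum.cong) auto
  finally have "(lower_pascal n * sign_diag n :: 'a mat) $$ (i, j) = of_nat (i choose j) * (-1) ^ j"
    using ij by simp
  then show "signed_pascal n $$ (i, j) = (lower_pascal n * sign_diag n :: 'a mat) $$ (i, j)"
    using ij by (simp add: signed_choose_def mult.commute)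
qed simp_all

lemma sum_signed_choose_mult_choose:
  "(\<Sum>l<n. signed_choose i l * of_nat (l choose j)) = (if i = j then (-1) ^ i else (0 :: 'a :: comm_ring_1))"
  if "i < n"
proof -
  let ?f = "\<lambda>l. signed_choose i l * (of_nat (l choose j) :: 'a)"
  have restrict: "(\<Sum>l<n. ?f l) = (\<Sum>l \<in> {j..i}. ?f l)"
    by (rule sum.mono_neutral_right) (use that in \<open>auto simp: signed_choose_def binomial_eq_0\<close>)
  show ?thesis
  proof (cases "j \<le> i")
    case False then show ?thesis unfolding restrict by auto
  next
    case True
    have "(\<Sum>l \<in> {j..i}. ?f l) = (\<Sum>t \<le> i - j. ?f (t + j))"
      using sum.shift_bounds_cl_nat_ivl[of ?f 0 j "i - j"] True by (simp add: atLeast0AtMost)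
    also have "\<dots> = (\<Sum>t \<le> i - j.
        (-1) ^ j * of_nat (i choose j) * ((-1) ^ t * of_nat ((i - j) choose t)))"
    proof (rule sum.cong [OF refl])
      fix t assume "t \<in> {..i - j}"
      then have "(i choose (t + j)) * ((t + j) choose j) = (i choose j) * ((i - j) choose t)"
        using choose_mult[of j "t + j" i] True by simp
      then have "of_nat (i choose (t + j)) * of_nat ((t + j) choose j) =
          (of_nat (i choose j) * of_nat ((i - j) choose t) :: 'a)"
        by (metis of_nat_mult)
      then show "?f (t + j) = (-1) ^ j * of_nat (i choose j) * ((-1) ^ t * of_nat ((i - j) choose t))"
        unfolding signed_choose_def power_add by (simp add: mult_ac)
    qed
    also have "\<dots> = (-1) ^ j * of_nat (i choose j) * (\<Sum>t \<le> i - j. (-1) ^ t * of_nat ((i - j) choose t))"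
      by (simp add: sum_distrib_left)
    also have "\<dots> = (if i = j then (-1) ^ i else 0)"
      using True choose_alternating_sum[of "i - j", where 'a = 'a] by auto
    finally show ?thesis unfolding restrict .
  qed
qed

lemma signed_pascal_mult_lower_pascal: "signed_pascal n * lower_pascal n = (sign_diag n :: 'a :: comm_ring_1 mat)"
  by (rule eq_matI) (auto simp: scalar_prod_def atLeast0LessThan sum_signed_choose_mult_choose)

lemma sign_diag_mult_self: "sign_diag n * sign_diag n = (1\<^sub>m n :: 'a :: comm_ring_1 mat)"
proof (rule eq_matI)
  fix i j assume "i < dim_row (1\<^sub>m n :: 'a mat)" "j < dim_col (1\<^sub>m n :: 'a mat)"
  then have ij: "i < n" "j < n" by auto
  have "(sign_diag n * sign_diag n) $$ (i, j) =
      (\<Sum>l<n. (if i = l then (-1) ^ i else 0) * (if l = j then (-1) ^ l else (0 :: 'a)))"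
    using ij by (auto simp: scalar_prod_def atLeast0LessThan intro!: sum.cong)
  also have "\<dots> = (\<Sum>l<n. if l = i then if i = j then 1 else 0 else 0)"
    by (rule sum.cong) (auto simp flip: power_add)
  finally show "(sign_diag n * sign_diag n) $$ (i, j) = (1\<^sub>m n :: 'a mat) $$ (i, j)"
    using ij by simp
qed simp_all

lemma signed_pascal_involution: "signed_pascal n * signed_pascal n = (1\<^sub>m n :: 'a :: comm_ring_1 mat)"
proof -
  have "signed_pascal n * signed_pascal n = signed_pascal n * (lower_pascal n * (sign_diag n :: 'a mat))"
    by (subst (2) signed_pascal_eq_mult) (rule refl)
  also have "\<dots> = (signed_pascal n * lower_pascal n) * sign_diag n"
    by (rule assoc_mult_mat [symmetric]) auto
  finally show ?thesis by (simp add: signed_pascal_mult_lower_pascal sign_diag_mult_self)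
qed

lemma signed_pascal_mult_vec_index_0:
  fixes v :: "'a :: comm_ring_1 vec"
  assumes "0 < n" "v \<in> carrier_vec n"
  shows "(signed_pascal n *\<^sub>v v) $ 0 = v $ 0"
proof -
  have "(signed_pascal n *\<^sub>v v) $ 0 = (\<Sum>l<n. signed_choose 0 l * v $ l)"
    using assms by (auto simp: scalar_prod_def atLeast0LessThan intro!: sum.cong)
  also have "\<dots> = (\<Sum>l<n. if l = 0 then v $ 0 else 0)"
    by (rule sum.cong) (auto simp: signed_choose_def binomial_eq_0)
  finally show ?thesis using assms by simp
qed

lemma lower_pascal_mult_transpose:
  "lower_pascal n * transpose_mat (lower_pascal n) =
    mat n n (\<lambda>(i, j). (of_nat ((i + j) choose i) :: 'a :: comm_ring_1))"
proof (rule eq_matI)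
  fix i j assume "i < dim_row (mat n n (\<lambda>(i, j). (of_nat ((i + j) choose i) :: 'a)))"
    "j < dim_col (mat n n (\<lambda>(i, j). (of_nat ((i + j) choose i) :: 'a)))"
  then have ij: "i < n" "j < n" by auto
  have "(lower_pascal n * transpose_mat (lower_pascal n) :: 'a mat) $$ (i, j) =
      (\<Sum>l<n. of_nat (i choose l) * of_nat (j choose l))"
    using ij by (auto simp: scalar_prod_def atLeast0LessThan intro!: sum.cong)
  also have "\<dots> = (\<Sum>l\<le>j. of_nat (i choose l) * of_nat (j choose l))"
    by (rule sum.mono_neutral_right) (use ij in \<open>auto simp: binomial_eq_0\<close>)
  also have "\<dots> = of_nat (\<Sum>l\<le>j. (i choose l) * (j choose (j - l)))"
    by (simp add: of_nat_sum binomial_symmetric [symmetric])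
  also have "\<dots> = of_nat ((i + j) choose i)"
    by (simp add: vandermonde binomial_symmetric [of i "i + j"])
  finally show "(lower_pascal n * transpose_mat (lower_pascal n)) $$ (i, j) =
      mat n n (\<lambda>(i, j). (of_nat ((i + j) choose i) :: 'a)) $$ (i, j)"
    using ij by simp
qed simp_all

lemma transpose_sign_diag: "transpose_mat (sign_diag n) = (sign_diag n :: 'a :: comm_ring_1 mat)"
  by (rule eq_matI) auto

lemma symmetric_pascal_conj_signed_pascal:
  fixes n :: nat and P :: "'a :: comm_ring_1 mat"
  defines "P \<equiv> lower_pascal n * transpose_mat (lower_pascal n)"
  shows "P * signed_pascal n * P = signed_pascal n"
proof -
  let ?L = "lower_pascal n :: 'a mat" and ?D = "sign_diag n :: 'a mat" and ?K = "signed_pascal n :: 'a mat"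
  have LDL: "?L * ?D * ?L = ?D"
    by (simp add: signed_pascal_mult_lower_pascal flip: signed_pascal_eq_mult)
  have "transpose_mat ?L * (?D * transpose_mat ?L) = transpose_mat (?L * ?D * ?L)"
    using transpose_mult [of "?L * ?D" n n ?L n] transpose_mult [of ?L n n ?D n]
    by (simp add: transpose_sign_diag)
  then have LTDLT: "transpose_mat ?L * (?D * transpose_mat ?L) = ?D"
    by (simp add: LDL transpose_sign_diag)
  have KL: "?K * (?L * X) = ?D * X" if "X \<in> carrier_mat n n" for X
    using that by (simp flip: signed_pascal_mult_lower_pascal add: assoc_mult_mat [of _ n n _ n _ n])
  have "P * ?K * P = ?L * (transpose_mat ?L * (?K * (?L * transpose_mat ?L)))"
    unfolding P_def using transpose_carrier_mat [of ?L n n]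
    by (simp add: assoc_mult_mat [of _ n n _ n _ n] mult_carrier_mat [of _ n n _ n])
  also have "\<dots> = ?L * ?D"
    by (simp add: KL LTDLT)
  finally show ?thesis
    by (simp flip: signed_pascal_eq_mult)
qed

definition J_off :: "nat \<Rightarrow> nat \<Rightarrow> real" where
  "J_off N k = real k * (real N ^ 2 - real k ^ 2)"

definition J_diag :: "nat \<Rightarrow> nat \<Rightarrow> real" where
  "J_diag N k = real k * (2 * real k ^ 2 + 3 * real k + 2 - real N ^ 2)"

lemma J_off_0 [simp]: "J_off N 0 = 0" and J_off_N [simp]: "J_off N N = 0"
  by (simp_all add: J_off_def)

lemma symmetric_choose_J_identity:
  "J_off N a * real (a - 1 + b choose (a - 1)) + J_diag N a * real (a + b choose a)
     + J_off N (Suc a) * real (Suc a + b choose Suc a)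
   = real (a + (b - 1) choose a) * J_off N b + real (a + b choose a) * J_diag N b
     + real (a + Suc b choose a) * J_off N (Suc b)"
proof (cases "a + b = 0")
  case True
  then show ?thesis by simp
next
  case False
  define s where "s = a + b"
  define c where "c = real (a + b choose a)"
  have s: "real s > 0" using False by (simp add: s_def del: of_nat_add)
  have sab: "real s = real a + real b" by (simp add: s_def)
  have a_pred: "J_off N a * real (a - 1 + b choose (a - 1)) = J_off N a * (real a * c / real s)"
  proof (cases "a = 0")
    case False
    then have "a * (s choose a) = s * ((s - 1) choose (a - 1))" by (simp add: times_binomial_minus1_eq)
    moreover have "a - 1 + b = s - 1" using False by (simp add: s_def)
    ultimately show ?thesis using s by (simp add: c_def s_def field_simps flip: of_nat_mult)
  qed simp
  have b_pred: "real (a + (b - 1) choose a) * J_off N b = real b * c / real s * J_off N b"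
  proof (cases "b = 0")
    case False
    then have "b * (s choose a) = s * ((s - 1) choose a)"
      using binomial_absorb_comp [of s a] by (simp add: s_def)
    moreover have "a + (b - 1) = s - 1" using False by (simp add: s_def)
    ultimately show ?thesis using s by (simp add: c_def s_def field_simps flip: of_nat_mult)
  qed simp
  have "Suc a * (Suc s choose Suc a) = Suc s * (s choose a)"
    by (rule Suc_times_binomial)
  then have a_succ: "real (Suc a + b choose Suc a) = real (Suc s) * c / real (Suc a)"
    unfolding c_def s_def by (simp add: field_simps del: binomial_Suc_Suc flip: of_nat_mult)
  have "(Suc s - a) * (Suc s choose a) = Suc s * (s choose a)"
    using binomial_absorb_comp [of "Suc s" a] by simp
  then have b_succ: "real (a + Suc b choose a) = real (Suc s) * c / real (Suc b)"
    unfolding c_def s_def by (simp add: field_simps del: binomial_Suc_Suc flip: of_nat_mult)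
  show ?thesis
    unfolding a_pred a_succ b_pred b_succ c_def [symmetric] using s
    by (simp add: sab J_off_def J_diag_def divide_simps power2_eq_square) (simp add: algebra_simps)
qed

lemma Suc_times_choose_Suc: "Suc k * (n choose Suc k) = (n - k) * (n choose k)"
  by (metis binomial_absorption binomial_absorb_comp)

lemma choose_J_anticommute_identity:
  "real (a choose b) * J_diag N b - real (a choose (b - 1)) * J_off N b
     - real (a choose Suc b) * J_off N (Suc b)
   + J_off N a * real ((a - 1) choose b) + J_diag N a * real (a choose b)
     + J_off N (Suc a) * real (Suc a choose b)
   = (real N ^ 2 - 1) * real (a choose b)"
proof (cases "b \<le> a")
  case False
  then show ?thesis
    by (cases "b = Suc a") (auto simp: binomial_eq_0)
next
  case True
  then obtain m where a: "a = b + m" using le_Suc_ex by blast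
  define c where "c = real (a choose b)"
  have b_pred: "real (a choose (b - 1)) * J_off N b = real b * c / real (Suc m) * J_off N b"
  proof (cases b)
    case (Suc k)
    have "a - k = Suc m" using Suc a by simp
    then have "Suc k * (a choose b) = Suc m * (a choose k)"
      using Suc_times_choose_Suc [of k a] Suc by simp
    then have "real (Suc k) * c = real (Suc m) * real (a choose k)"
      unfolding c_def by (metis of_nat_mult)
    then show ?thesis using Suc by (simp add: field_simps)
  qed simp
  have b_succ: "real (a choose Suc b) = real m * c / real (Suc b)"
    using Suc_times_choose_Suc [of b a] a by (simp add: c_def field_simps flip: of_nat_mult)
  have "real a * real ((a - 1) choose b) = real m * c"
    using binomial_absorb_comp [of a b] a unfolding c_def by (metis add_diff_cancel_left' of_nat_mult)
  then have a_pred: "J_off N a * real ((a - 1) choose b) = (real N ^ 2 - real a ^ 2) * real m * c"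
    by (simp add: J_off_def)
  have a_succ: "real (Suc a choose b) = real (Suc a) * c / real (Suc m)"
    using binomial_absorb_comp [of "Suc a" b] a by (simp add: c_def field_simps flip: of_nat_mult)
  show ?thesis
    unfolding b_pred b_succ a_pred a_succ c_def [symmetric]
    by (simp add: a J_off_def J_diag_def divide_simps power2_eq_square) (simp add: algebra_simps)
qed

lemma signed_choose_J_anticommute_identity:
  "signed_choose a (b - 1) * J_off N b + signed_choose a b * J_diag N b
     + signed_choose a (Suc b) * J_off N (Suc b)
   + J_off N a * signed_choose (a - 1) b + J_diag N a * signed_choose a b
     + J_off N (Suc a) * signed_choose (Suc a) b
   = (real N ^ 2 - 1) * signed_choose a b"
proof -
  have "signed_choose a (b - 1) * J_off N b = - ((-1) ^ b * (real (a choose (b - 1)) * J_off N b))"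
    by (cases b) (simp_all add: signed_choose_def)
  then show ?thesis
    using arg_cong [OF choose_J_anticommute_identity [of a b N], of "(*) ((-1) ^ b)"]
    by (simp add: signed_choose_def algebra_simps)
qed

lemma Jmat_tridiag: "Jmat N = tridiag N (J_diag N) (J_off N)"
  by (rule eq_matI) (auto simp: Jmat_def tridiag_def J_diag_def J_off_def Let_def)

abbreviation J_char :: "nat \<Rightarrow> real mat" where
  "J_char N \<equiv> char_matrix (Jmat N) ((real N ^ 2 - 1) / 2)"

lemma J_char_tridiag: "J_char N = tridiag N (\<lambda>k. J_diag N k - (real N ^ 2 - 1) / 2) (J_off N)"
  by (simp add: Jmat_tridiag char_matrix_tridiag)

lemma J_char_carrier [simp]: "J_char N \<in> carrier_mat N N"
  and J_char_dim [simp]: "dim_row (J_char N) = N" "dim_col (J_char N) = N"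
  by (simp_all add: J_char_tridiag)

lemma Pascal_carrier [simp]: "Pascal N \<in> carrier_mat N N"
  and Pascal_dim [simp]: "dim_row (Pascal N) = N" "dim_col (Pascal N) = N"
  by (simp_all add: Pascal_def)

lemma Pascal_commutes_J_char: "Pascal N * J_char N = J_char N * Pascal N"
proof (rule eq_matI)
  fix a b assume "a < dim_row (J_char N * Pascal N)" "b < dim_col (J_char N * Pascal N)"
  then have "a < N" "b < N" by (simp_all add: Pascal_def)
  then show "(Pascal N * J_char N) $$ (a, b) = (J_char N * Pascal N) $$ (a, b)"
    using symmetric_choose_J_identity [of N a b] unfolding J_char_tridiag Pascal_def
    by (simp add: mult_tridiag_index tridiag_mult_index algebra_simps del: index_mult_mat(1))
qed (simp_all add: Pascal_def)

lemma signed_pascal_anticommutes_J_char: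
  "signed_pascal N * J_char N = - (J_char N * signed_pascal N)"
proof (rule eq_matI)
  fix a b assume "a < dim_row (- (J_char N * signed_pascal N))" "b < dim_col (- (J_char N * signed_pascal N))"
  then have "a < N" "b < N" by simp_all
  then show "(signed_pascal N * J_char N) $$ (a, b) = (- (J_char N * signed_pascal N)) $$ (a, b)"
    using signed_choose_J_anticommute_identity [of a b N] unfolding J_char_tridiag signed_pascal_def
    by (simp add: mult_tridiag_index tridiag_mult_index field_simps del: index_mult_mat(1))
qed simp_all

lemma vseq_rat: "vseq N k \<in> \<rat>"
  by (induction N k rule: vseq.induct) (auto simp: Let_def)

lemma vvec_carrier [simp]: "vvec N \<in> carrier_vec N"
  and vvec_dim [simp]: "dim_vec (vvec N) = N"
  and vvec_index [simp]: "k < N \<Longrightarrow> vvec N $ k = vseq N k"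
  by (simp_all add: vvec_def)

lemma vseq_Suc_Suc:
  "vseq N (Suc (Suc j)) = (((real N ^ 2 - 1) / 2 - J_diag N (Suc j)) * vseq N (Suc j)
      - J_off N (Suc j) * vseq N j) / J_off N (Suc (Suc j))"
  by (simp add: Let_def J_diag_def J_off_def algebra_simps)

lemma J_off_nonzero: "0 < k \<Longrightarrow> k < N \<Longrightarrow> J_off N k \<noteq> 0"
  by (simp add: J_off_def power_strict_mono)

lemma J_char_vvec_index:
  assumes "Suc a < N"
  shows "(J_char N *\<^sub>v vvec N) $ a = 0"
proof -
  have "(J_char N *\<^sub>v vvec N) $ a = J_off N a * vseq N (a - 1)
      + (J_diag N a - (real N ^ 2 - 1) / 2) * vseq N a + J_off N (Suc a) * vseq N (Suc a)"
    using assms by (simp add: J_char_tridiag tridiag_mult_vec_index del: index_mult_mat_vec)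
  also have "\<dots> = 0"
  proof (cases a)
    case 0
    then show ?thesis by (simp add: J_off_def J_diag_def)
  next
    case (Suc j)
    have "J_off N (Suc (Suc j)) \<noteq> 0"
      using J_off_nonzero assms Suc by simp
    then have "J_off N (Suc (Suc j)) * vseq N (Suc (Suc j)) =
        ((real N ^ 2 - 1) / 2 - J_diag N (Suc j)) * vseq N (Suc j) - J_off N (Suc j) * vseq N j"
      by (subst vseq_Suc_Suc) simp
    then show ?thesis using Suc by (simp add: algebra_simps del: vseq.simps)
  qed
  finally show ?thesis .
qed

lemma J_char_kernel:
  assumes w: "w \<in> carrier_vec N" and Jw: "J_char N *\<^sub>v w = 0\<^sub>v N"
  shows "w = w $ 0 \<cdot>\<^sub>v vvec N"
proof (cases "N = 0")
  case True
  then show ?thesis using w by (intro eq_vecI) auto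
next
  case False
  let ?u = "w - w $ 0 \<cdot>\<^sub>v vvec N"
  have u: "?u \<in> carrier_vec N" using w by simp
  have rows: "(J_char N *\<^sub>v ?u) $ a = 0" if "Suc a < N" for a
  proof -
    have "J_char N *\<^sub>v ?u = J_char N *\<^sub>v w - w $ 0 \<cdot>\<^sub>v (J_char N *\<^sub>v vvec N)"
      using w by (simp add: mult_minus_distrib_mat_vec [of _ N N] mult_mat_vec [of _ N N])
    then show ?thesis using that Jw J_char_vvec_index [OF that] by simp
  qed
  have u0: "?u = 0\<^sub>v N"
    by (rule tridiag_kernel_trivial [where e = "J_off N" and n = N])
      (use J_off_nonzero u False rows in \<open>simp_all add: J_char_tridiag\<close>)
  show ?thesis
  proof (rule eq_vecI)
    fix i assume "i < dim_vec (w $ 0 \<cdot>\<^sub>v vvec N)"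
    then show "w $ i = (w $ 0 \<cdot>\<^sub>v vvec N) $ i"
      using arg_cong [OF u0, of "\<lambda>x. x $ i"] w by simp
  qed (use w in simp)
qed

lemma J_char_vvec:
  assumes "odd N"
  shows "J_char N *\<^sub>v vvec N = 0\<^sub>v N"
proof -
  have "det (J_char N) = 0"
    by (rule det_zero_if_anticommutes_with_involution [OF J_char_carrier pascal_carrier(3)
          signed_pascal_involution signed_pascal_anticommutes_J_char \<open>odd N\<close>])
  then obtain w where w: "w \<in> carrier_vec N" "w \<noteq> 0\<^sub>v N" "J_char N *\<^sub>v w = 0\<^sub>v N"
    using det_0_iff_vec_prod_zero [OF J_char_carrier] by blast
  define c where "c = w $ 0"
  have w_eq: "w = c \<cdot>\<^sub>v vvec N" unfolding c_def using J_char_kernel w(1,3) .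
  have c: "c \<noteq> 0"
  proof
    assume "c = 0"
    then have "w = 0\<^sub>v N" using w_eq by (intro eq_vecI) auto
    then show False using w(2) by simp
  qed
  have scaled: "c \<cdot>\<^sub>v (J_char N *\<^sub>v vvec N) = 0\<^sub>v N"
    using w(3) mult_mat_vec [OF J_char_carrier vvec_carrier, where k = c] by (simp add: w_eq)
  have "(J_char N *\<^sub>v vvec N) $ i = 0" if "i < N" for i
  proof -
    have "c * (J_char N *\<^sub>v vvec N) $ i = 0"
      using arg_cong [OF scaled, of "\<lambda>x. x $ i"] that by (simp del: index_mult_mat_vec)
    then show ?thesis using c by simp
  qed
  then show ?thesis by (intro eq_vecI) simp_all
qed

lemma vvec_nonzero: "0 < N \<Longrightarrow> vvec N \<noteq> 0\<^sub>v N"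
  by (auto dest: arg_cong [where f = "\<lambda>x. x $ 0"])

lemma kernel_intertwine:
  fixes A M M' :: "'a :: comm_ring_1 mat"
  assumes A: "A \<in> carrier_mat n n" and M: "M \<in> carrier_mat n n" and M': "M' \<in> carrier_mat n n"
    and AM: "A * M = M' * A" and v: "v \<in> carrier_vec n" and Av: "A *\<^sub>v v = 0\<^sub>v n"
  shows "A *\<^sub>v (M *\<^sub>v v) = 0\<^sub>v n"
proof -
  have "A *\<^sub>v (M *\<^sub>v v) = (A * M) *\<^sub>v v"
    by (rule assoc_mult_mat_vec [symmetric, OF A M v])
  also have "\<dots> = M' *\<^sub>v (A *\<^sub>v v)"
    unfolding AM by (rule assoc_mult_mat_vec [OF M' A v])
  also have "\<dots> = 0\<^sub>v n"
    using Av M' by auto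
  finally show ?thesis .
qed

lemma intertwiner_mult_vvec:
  assumes "odd N" and M: "M \<in> carrier_mat N N" "M' \<in> carrier_mat N N"
    and "J_char N * M = M' * J_char N"
  shows "M *\<^sub>v vvec N = (M *\<^sub>v vvec N) $ 0 \<cdot>\<^sub>v vvec N"
proof (rule J_char_kernel)
  show "M *\<^sub>v vvec N \<in> carrier_vec N" using M(1) by simp
  show "J_char N *\<^sub>v (M *\<^sub>v vvec N) = 0\<^sub>v N"
    by (rule kernel_intertwine [OF J_char_carrier M assms(4) vvec_carrier J_char_vvec [OF \<open>odd N\<close>]])
qed

lemma signed_pascal_vvec:
  assumes "odd N"
  shows "signed_pascal N *\<^sub>v vvec N = vvec N"
proof -
  have N: "0 < N" using assms by (cases N) auto
  have "J_char N * signed_pascal N = (- signed_pascal N) * J_char N"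
    by (simp add: signed_pascal_anticommutes_J_char)
  then have "signed_pascal N *\<^sub>v vvec N = (signed_pascal N *\<^sub>v vvec N) $ 0 \<cdot>\<^sub>v vvec N"
    by (rule intertwiner_mult_vvec [OF assms pascal_carrier(3) uminus_carrier_mat [OF pascal_carrier(3)]])
  then have "signed_pascal N *\<^sub>v vvec N = vvec N $ 0 \<cdot>\<^sub>v vvec N"
    unfolding signed_pascal_mult_vec_index_0 [OF N vvec_carrier] .
  then show ?thesis using N by simp
qed

lemma Pascal_eq_gram: "Pascal N = lower_pascal N * transpose_mat (lower_pascal N)"
  by (simp add: Pascal_def lower_pascal_mult_transpose)

lemma Pascal_vvec:
  assumes "odd N"
  shows "Pascal N *\<^sub>v vvec N = vvec N"
proof -
  let ?T = "Pascal N" and ?K = "signed_pascal N :: real mat" and ?v = "vvec N"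
  have N: "0 < N" using assms by (cases N) auto
  define \<mu> where "\<mu> = (?T *\<^sub>v ?v) $ 0"
  have Tv: "?T *\<^sub>v ?v = \<mu> \<cdot>\<^sub>v ?v"
    unfolding \<mu>_def by (rule intertwiner_mult_vvec [OF assms Pascal_carrier Pascal_carrier])
      (simp add: Pascal_commutes_J_char)
  have Kv: "?K *\<^sub>v ?v = ?v" using signed_pascal_vvec [OF assms] .
  have TKT: "?T * ?K * ?T = ?K"
    unfolding Pascal_eq_gram by (rule symmetric_pascal_conj_signed_pascal)
  have "?v = (?T * ?K * ?T) *\<^sub>v ?v"
    by (simp add: TKT Kv)
  also have "\<dots> = ?T *\<^sub>v (?K *\<^sub>v (?T *\<^sub>v ?v))"
    by (simp add: assoc_mult_mat_vec [of _ N N _ N] mult_carrier_mat [of _ N N _ N]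
        mult_mat_vec_carrier [of _ N N])
  also have "\<dots> = \<mu> \<cdot>\<^sub>v (\<mu> \<cdot>\<^sub>v ?v)"
    by (simp add: Tv Kv mult_mat_vec [of _ N N])
  finally have "?v $ 0 = (\<mu> \<cdot>\<^sub>v (\<mu> \<cdot>\<^sub>v ?v)) $ 0"
    by (rule arg_cong)
  then have "\<mu> ^ 2 = 1"
    using N by (simp add: power2_eq_square)
  moreover have "\<mu> \<ge> 0"
    using gram_eigenvalue_nonneg [OF pascal_carrier(1) vvec_carrier vvec_nonzero [OF N]] Tv
    by (simp flip: Pascal_eq_gram)
  ultimately have "\<mu> = 1"
    using power2_eq_1_iff [of \<mu>] by auto
  then show ?thesis using Tv by simp
qed

lemma Jmat_carrier: "Jmat N \<in> carrier_mat N N"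
  by (simp add: Jmat_tridiag)

theorem mainTheorem13:
  fixes N :: nat
  assumes "odd N" and "N \<ge> 3"
  shows "(\<forall>k<N. vseq N k \<in> \<rat>)
    \<and> eigenvector (Jmat N) (vvec N) ((real N^2 - 1) / 2)
    \<and> eigenvector (Pascal N) (vvec N) 1
    \<and> (\<forall>w. eigenvector (Jmat N) w ((real N^2 - 1) / 2) \<longrightarrow> (\<exists>c. w = c \<cdot>\<^sub>v vvec N))"
proof -
  have v: "vvec N \<noteq> 0\<^sub>v N" using assms by (intro vvec_nonzero) simp
  have "eigenvector (Jmat N) (vvec N) ((real N^2 - 1) / 2)"
    using J_char_vvec [OF \<open>odd N\<close>] v by (simp add: eigenvector_char_matrix [OF Jmat_carrier])
  moreover have "eigenvector (Pascal N) (vvec N) 1"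
    using Pascal_vvec [OF \<open>odd N\<close>] v by (simp add: eigenvector_def)
  moreover have "\<exists>c. w = c \<cdot>\<^sub>v vvec N" if "eigenvector (Jmat N) w ((real N^2 - 1) / 2)" for w
    using that J_char_kernel by (auto simp: eigenvector_char_matrix [OF Jmat_carrier])
  ultimately show ?thesis using vseq_rat by blast
qed

end
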